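(* Let $\alpha^1,\dots,\alpha^p,\beta^1,\dots,\beta^p$ be smooth functions of $(t,x)$ such that $\sum_{s=1}^p(\alpha^s_i\beta^s_j-\alpha^s_j\beta^s_i)=0$ for all $0\le i<j\le p$, where subscripts denote orders of $x$-derivatives. Then $W(\alpha^1,\dots,\alpha^p,\beta^{s'})=0$ for every $s'\in\{1,\dots,p\}$.
   Context: The Wronskian with respect to $x$ of functions $\varphi^1,\dots,\varphi^l$ of $(t,x)$ is $W(\varphi^1,\dots,\varphi^l)=\det\bigl(\partial_x^{i}\varphi^j\bigr)_{i=0,\dots,l-1;\ j=1,\dots,l}$. *)

theory Defs
  imports "HOL-Analysis.Analysis" "Jordan_Normal_Form.Determinant"
begin

text \<open>Functions of (t,x) are modelled as maps real \<times> real \<Rightarrow> real.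
  Partial derivatives via the Frechet derivative in direction (1,0) (for t) or (0,1) (for x).\<close>

definition pdt :: "(real \<times> real \<Rightarrow> real) \<Rightarrow> real \<times> real \<Rightarrow> real" where
  "pdt f z = frechet_derivative f (at z) (1, 0)"

definition pdx :: "(real \<times> real \<Rightarrow> real) \<Rightarrow> real \<times> real \<Rightarrow> real" where
  "pdx f z = frechet_derivative f (at z) (0, 1)"

definition iter_pd :: "bool list \<Rightarrow> (real \<times> real \<Rightarrow> real) \<Rightarrow> real \<times> real \<Rightarrow> real" where
  "iter_pd bs f = foldr (\<lambda>b g. if b then pdt g else pdx g) bs f"

definition smooth2 :: "(real \<times> real \<Rightarrow> real) \<Rightarrow> bool" where
  "smooth2 f \<longleftrightarrow> (\<forall>bs z. iter_pd bs f differentiable (at z))"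

definition xder :: "nat \<Rightarrow> (real \<times> real \<Rightarrow> real) \<Rightarrow> real \<times> real \<Rightarrow> real" where
  "xder k f = (pdx ^^ k) f"

definition wronskian :: "nat \<Rightarrow> (nat \<Rightarrow> real \<times> real \<Rightarrow> real) \<Rightarrow> real \<times> real \<Rightarrow> real" where
  "wronskian l \<phi> z = Determinant.det (mat l l (\<lambda>(i, j). xder i (\<phi> j) z))"

end

theory Submission
  imports Defs
begin

text \<open>At each point the statement is pure linear algebra.
  Let \<open>A\<close> and \<open>B\<close> be the \<open>(p+1) \<times> p\<close> matrices of \<open>x\<close>-derivatives of the \<open>\<alpha>\<^sup>s\<close> and \<open>\<beta>\<^sup>s\<close>;
  the hypothesis says that \<open>A B\<^sup>T\<close> is symmetric. If the Wronskian matrix \<open>W = [A | b]\<close>,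
  \<open>b\<close> a column of \<open>B\<close>, were invertible, its inverse would supply a covector \<open>v\<close>
  with \<open>v A = 0\<close> and \<open>v b = 1\<close>. Then \<open>A (B\<^sup>T v) = B (A\<^sup>T v) = 0\<close>, so \<open>(B\<^sup>T v, 0)\<close> lies in the
  kernel of \<open>W\<close>, although its entry at the position of \<open>b\<close> is \<open>v b = 1\<close>.\<close>

lemma det_nonzero_imp_dual_vector:
  fixes W :: "'a::field mat"
  assumes W: "W \<in> carrier_mat n n" and det: "det W \<noteq> 0" and k: "k < n"
  shows "\<exists>v \<in> carrier_vec n. \<forall>j < n. col W j \<bullet> v = (if j = k then 1 else 0)"
proof -
  obtain C where C: "C \<in> carrier_mat n n" and CW: "C * W = 1\<^sub>m n"
    using det_non_zero_imp_unit[OF W det, of "()"] by (auto simp: Units_def ring_mat_def)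
  have "col W j \<bullet> row C k = (if j = k then 1 else 0)" if "j < n" for j
    using arg_cong[OF CW, of "\<lambda>M. M $$ (k, j)"] that k C W
    by (simp add: comm_scalar_prod[of _ n])
  then show ?thesis
    using C k by (intro bexI[of _ "row C k"]) auto
qed

lemma symmetric_pairing_kernel:
  fixes A B :: "'a::comm_ring mat"
  assumes A: "A \<in> carrier_mat n p" and B: "B \<in> carrier_mat n p"
    and sym: "A * B\<^sup>T = B * A\<^sup>T"
    and v: "v \<in> carrier_vec n" and annihilates: "A\<^sup>T *\<^sub>v v = 0\<^sub>v p"
  shows "A *\<^sub>v (B\<^sup>T *\<^sub>v v) = 0\<^sub>v n"
proof -
  have "A *\<^sub>v (B\<^sup>T *\<^sub>v v) = (A * B\<^sup>T) *\<^sub>v v"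
    using A B v by simp
  also have "\<dots> = B *\<^sub>v (A\<^sup>T *\<^sub>v v)"
    using A B v by (simp add: sym)
  also have "\<dots> = 0\<^sub>v n"
    using B by (intro eq_vecI) (auto simp: annihilates)
  finally show ?thesis .
qed

lemma det_append_col_eq_0_if_symmetric_pairing:
  fixes A B :: "'a::field mat"
  assumes A: "A \<in> carrier_mat (Suc p) p" and B: "B \<in> carrier_mat (Suc p) p"
    and sym: "A * B\<^sup>T = B * A\<^sup>T" and k: "k < p"
  shows "det (mat (Suc p) (Suc p) (\<lambda>(i, j). if j < p then A $$ (i, j) else B $$ (i, k))) = 0"
    (is "det ?W = 0")
proof (rule ccontr)
  assume "det ?W \<noteq> 0"
  then obtain v where v: "v \<in> carrier_vec (Suc p)"
    and dual: "\<forall>j < Suc p. col ?W j \<bullet> v = (if j = p then 1 else 0)"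
    using det_nonzero_imp_dual_vector[of ?W "Suc p" p] by auto
  have "A\<^sup>T *\<^sub>v v = 0\<^sub>v p"
  proof (rule eq_vecI)
    fix j assume "j < dim_vec (0\<^sub>v p :: 'a vec)"
    then have "j < p"
      by simp
    have "col ?W j \<bullet> v = 0"
      using dual \<open>j < p\<close> by (simp del: col_mat)
    moreover have "col ?W j = col A j"
      using A \<open>j < p\<close> by (auto simp: col_def)
    ultimately show "(A\<^sup>T *\<^sub>v v) $ j = 0\<^sub>v p $ j"
      using A \<open>j < p\<close> by simp
  qed (use A in simp)
  define w where "w = B\<^sup>T *\<^sub>v v"
  have Aw: "A *\<^sub>v w = 0\<^sub>v (Suc p)"
    unfolding w_def by (rule symmetric_pairing_kernel[OF A B sym v \<open>A\<^sup>T *\<^sub>v v = 0\<^sub>v p\<close>])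
  have "col ?W p \<bullet> v = 1"
    using dual by (simp del: col_mat)
  moreover have "col ?W p = col B k"
    using B k by (auto simp: col_def)
  ultimately have "w $ k = 1"
    using B k by (simp add: w_def)
  define x where "x = vec (Suc p) (\<lambda>j. if j < p then w $ j else 0)"
  have "?W *\<^sub>v x = A *\<^sub>v w"
    using A B by (intro eq_vecI) (auto simp: x_def w_def scalar_prod_def)
  moreover have "x \<noteq> 0\<^sub>v (Suc p)"
    using \<open>w $ k = 1\<close> k by (auto simp: x_def dest!: arg_cong[of _ _ "\<lambda>u. u $ k"])
  ultimately have "det ?W = 0"
    unfolding det_0_iff_vec_prod_zero_field[OF mat_carrier] using Aw
    by (intro exI[of _ x]) (auto simp: x_def)
  with \<open>det ?W \<noteq> 0\<close> show False ..
qed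

lemma mult_transpose_symmetric_if_antisymmetric_sum:
  fixes a b :: "nat \<Rightarrow> nat \<Rightarrow> 'a::comm_ring"
  assumes "\<And>i j. i < j \<Longrightarrow> j < n \<Longrightarrow> (\<Sum>s<p. a s i * b s j - a s j * b s i) = 0"
  shows "mat n p (\<lambda>(i, s). a s i) * (mat n p (\<lambda>(i, s). b s i))\<^sup>T
       = mat n p (\<lambda>(i, s). b s i) * (mat n p (\<lambda>(i, s). a s i))\<^sup>T" (is "?L = ?R")
proof (rule eq_matI)
  fix i j assume "i < dim_row ?R" "j < dim_col ?R"
  then have "i < n" "j < n"
    by simp_all
  then have "(\<Sum>s<p. a s i * b s j) = (\<Sum>s<p. a s j * b s i)"
    using assms[of i j] assms[of j i]
    by (cases i j rule: linorder_cases) (auto simp: sum_subtractf)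
  with \<open>i < n\<close> \<open>j < n\<close>
  show "?L $$ (i, j) = ?R $$ (i, j)"
    by (simp add: scalar_prod_def atLeast0LessThan mult.commute)
qed simp_all

theorem lemma7:
  fixes p :: nat
    and \<alpha> \<beta> :: "nat \<Rightarrow> real \<times> real \<Rightarrow> real"
  assumes smooth_\<alpha>: "\<And>s. s \<in> {1..p} \<Longrightarrow> smooth2 (\<alpha> s)"
    and smooth_\<beta>: "\<And>s. s \<in> {1..p} \<Longrightarrow> smooth2 (\<beta> s)"
    and rel: "\<And>i j z. i < j \<Longrightarrow> j \<le> p \<Longrightarrow>
      (\<Sum>s = 1..p. xder i (\<alpha> s) z * xder j (\<beta> s) z - xder j (\<alpha> s) z * xder i (\<beta> s) z) = 0"
    and s': "s' \<in> {1..p}"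
  shows "wronskian (p + 1) (\<lambda>j. if j < p then \<alpha> (j + 1) else \<beta> s') z = 0"
proof -
  define A where "A = mat (Suc p) p (\<lambda>(i, s). xder i (\<alpha> (Suc s)) z)"
  define B where "B = mat (Suc p) p (\<lambda>(i, s). xder i (\<beta> (Suc s)) z)"
  have symmetric: "A * B\<^sup>T = B * A\<^sup>T"
    unfolding A_def B_def
    by (rule mult_transpose_symmetric_if_antisymmetric_sum)
      (use rel in \<open>simp add: sum.atLeast1_atMost_eq\<close>)
  obtain k where k: "s' = Suc k" "k < p"
    using s' by (cases s') auto
  have "wronskian (p + 1) (\<lambda>j. if j < p then \<alpha> (j + 1) else \<beta> s') z
      = det (mat (Suc p) (Suc p) (\<lambda>(i, j). if j < p then A $$ (i, j) else B $$ (i, k)))"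
    unfolding wronskian_def by (intro arg_cong[where f = det] eq_matI) (auto simp: A_def B_def k)
  also have "\<dots> = 0"
    by (rule det_append_col_eq_0_if_symmetric_pairing[OF _ _ symmetric \<open>k < p\<close>])
      (simp_all add: A_def B_def)
  finally show ?thesis .
qed

end
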